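(* Let $q,d\geq 2$ be integers. Suppose that for every $\mathbf{s}\in(\mathbb{Z}/d\mathbb{Z})^5$ the density $\delta(q,d;\mathbf{s})$ exists, and let $\boldsymbol{\delta}$ be the column vector $(\delta(q,d;\mathbf{s}))_{\mathbf{s}\in(\mathbb{Z}/d\mathbb{Z})^5}$. Then $P(q,d)\boldsymbol{\delta}=\boldsymbol{\delta}$ (i.e., $\boldsymbol{\delta}$ is a right eigenvector of $P(q,d)$ with eigenvalue $1$), and all entries of $\boldsymbol{\delta}$ are rational numbers.
   Context: For an integer $q\geq 2$ and $n\in\mathbb{N}$: $v_q(0)=0$ and, for $n>0$, $v_q(n)=\max\{k: q^k\mid n\}$; $w_q(n)=\sum_{i=0}^n v_q(i)$; $u_q(n)=\sum_{i=0}^n w_q(i)$. For $\mathbf{s}=(\theta_u,\theta_w,\theta_2,\theta_1,\theta_0)$ with entries in $\mathbb{Z}$ (or in $\mathbb{Z}/d\mathbb{Z}$, which is equivalent since only residues mod $d$ matter), $\gamma(A,q,d;\mathbf{s})$ is the number of $n\in\mathbb{N}$, $n<A$, with $\theta_u u_q(n)+\theta_w w_q(n)+\theta_2\frac{n(n+1)}{2}+\theta_1 n+\theta_0\equiv 0\pmod d$, and $\delta(q,d;\mathbf{s})=\lim_{N\to\infty}\gamma(N,q,d;\mathbf{s})/N$ when this limit exists. For $\lambda\in\{0,\ldots,q-1\}$ let $M_\lambda$ be the $5\times5$ matrix, reduced modulo $d$, $$M_\lambda=\begin{pmatrix} q & \lambda-q+1 & q & \lambda-q+1 & 0\\ 0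 & 1 & 0 & 1 & 0\\ 0 & 0 & q^2 & \lambda q-\frac{q(q-1)}{2} & \frac{\lambda(\lambda+1)}{2}\\ 0 & 0 & 0 & q & \lambda\\ 0 & 0 & 0 & 0 & 1 \end{pmatrix}.$$ For $\mathbf{s},\mathbf{t}\in(\mathbb{Z}/d\mathbb{Z})^5$ (row vectors), let $\mu(\mathbf{s},\mathbf{t})$ be the number of $\lambda\in\{0,\ldots,q-1\}$ with $\mathbf{t}=\mathbf{s}M_\lambda$. Then $P(q,d)$ is the $d^5\times d^5$ matrix indexed by $(\mathbb{Z}/d\mathbb{Z})^5$ with $(\mathbf{s},\mathbf{t})$-entry $\mu(\mathbf{s},\mathbf{t})/q$. *)

theory Defs
  imports Complex_Main
begin

definition vq :: "nat \<Rightarrow> nat \<Rightarrow> nat" where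
  "vq q n = (if n = 0 then 0 else Max {k. q ^ k dvd n})"

definition wq :: "nat \<Rightarrow> nat \<Rightarrow> nat" where
  "wq q n = (\<Sum>i\<le>n. vq q i)"

definition uq :: "nat \<Rightarrow> nat \<Rightarrow> nat" where
  "uq q n = (\<Sum>i\<le>n. wq q i)"

text \<open>Parameter vectors s = (theta_u, theta_w, theta_2, theta_1, theta_0), as int lists of length 5
  (index 0 = theta_u, ..., index 4 = theta_0).\<close>
definition gamma :: "nat \<Rightarrow> nat \<Rightarrow> nat \<Rightarrow> int list \<Rightarrow> nat" where
  "gamma A q d s = card {n. n < A \<and>
     (s!0 * int (uq q n) + s!1 * int (wq q n) + s!2 * int (n * (n + 1) div 2)
       + s!3 * int n + s!4) mod int d = 0}"

definition delta :: "nat \<Rightarrow> nat \<Rightarrow> int list \<Rightarrow> real" where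
  "delta q d s = lim (\<lambda>N. real (gamma N q d s) / real N)"

definition delta_exists :: "nat \<Rightarrow> nat \<Rightarrow> int list \<Rightarrow> bool" where
  "delta_exists q d s = convergent (\<lambda>N. real (gamma N q d s) / real N)"

text \<open>(Z/dZ)^5, represented by residue lists of length 5 with entries in {0..d-1}.\<close>
definition residues5 :: "nat \<Rightarrow> int list set" where
  "residues5 d = {s. length s = 5 \<and> (\<forall>i<5. 0 \<le> s!i \<and> s!i < int d)}"

definition Mmat :: "nat \<Rightarrow> nat \<Rightarrow> nat \<Rightarrow> nat \<Rightarrow> int" where
  "Mmat q lam i j =
    (let q' = int q; l = int lam in
     [[q', l - q' + 1, q', l - q' + 1, 0],
      [0, 1, 0, 1, 0],
      [0, 0, q'^2, l * q' - q' * (q' - 1) div 2, l * (l + 1) div 2],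
      [0, 0, 0, q', l],
      [0, 0, 0, 0, 1]] ! i ! j)"

definition vecmat :: "nat \<Rightarrow> nat \<Rightarrow> nat \<Rightarrow> int list \<Rightarrow> int list" where
  "vecmat q d lam s = map (\<lambda>j. (\<Sum>i<5. s!i * Mmat q lam i j) mod int d) [0..<5]"

definition mu :: "nat \<Rightarrow> nat \<Rightarrow> int list \<Rightarrow> int list \<Rightarrow> nat" where
  "mu q d s t = card {lam. lam < q \<and> t = vecmat q d lam s}"

definition Pmat :: "nat \<Rightarrow> nat \<Rightarrow> int list \<Rightarrow> int list \<Rightarrow> real" where
  "Pmat q d s t = real (mu q d s t) / real q"

end

theory Submission
  imports Defs "HOL-Computational_Algebra.Primes"
begin

text \<open>Write \<open>n = q m + \<lambda>\<close> with \<open>\<lambda> < q\<close>. The vector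
  \<open>f(n) = (u\<^sub>q(n), w\<^sub>q(n), n(n+1)/2, n, 1)\<close> satisfies \<open>f(q m + \<lambda>) = M\<^sub>\<lambda> f(m)\<close>,
  so the condition \<open>s \<bullet> f(n) \<equiv> 0 (mod d)\<close> becomes \<open>(s M\<^sub>\<lambda>) \<bullet> f(m) \<equiv> 0\<close>. Sorting the
  \<open>n < q N\<close> by their last digit gives \<open>\<gamma>(q N; s) / (q N) = \<Sum>\<^sub>t P(s,t) \<gamma>(N; t) / N\<close>, and
  letting \<open>N \<rightarrow> \<infinity>\<close> gives \<open>P \<delta> = \<delta>\<close>.

  For rationality, the rational vectors \<open>x\<^sub>k = (\<gamma>(q\<^sup>k; s) / q\<^sup>k)\<^sub>s\<close> satisfy
  \<open>x\<^sub>k\<^sub>+\<^sub>1 = P x\<^sub>k\<close>. Among \<open>x\<^sub>0, \<dots>, x\<^sub>D\<close> with \<open>D = d\<^sup>5\<close> there is a nontrivial rational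
  linear relation, which \<open>P\<close> propagates to a linear recurrence with rational coefficients
  satisfied by every coordinate sequence. A convergent rational sequence satisfying such a
  recurrence has a rational limit: if the coefficients do not sum to zero the limit is
  determined by them, and otherwise the recurrence factors through the difference operator,
  which lowers its order.\<close>

section \<open>Digit recursions\<close>

lemma vq_eq_multiplicity:
  fixes q n :: nat
  shows "q \<noteq> 1 \<Longrightarrow> vq q n = multiplicity q n"
  by (simp add: vq_def multiplicity_eq_Max)

lemma vq_eq_0: "\<not> q dvd n \<Longrightarrow> vq q n = 0"
  by (cases "q = 1") (simp_all add: vq_eq_multiplicity not_dvd_imp_multiplicity_0)

lemma vq_mult_self: "q \<ge> 2 \<Longrightarrow> n > 0 \<Longrightarrow> vq q (q * n) = Suc (vq q n)"
  using multiplicity_times_same[of n q] by (simp add: vq_eq_multiplicity)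

lemma wq_Suc: "wq q (Suc n) = wq q n + vq q (Suc n)"
  by (simp add: wq_def)

lemma uq_Suc: "uq q (Suc n) = uq q n + wq q (Suc n)"
  by (simp add: uq_def)

lemma wq_digit:
  assumes "q \<ge> 2" "l < q"
  shows "wq q (q * m + l) = wq q m + m"
  using assms(2)
proof (induction m arbitrary: l)
  case 0
  have "vq q i = 0" if "i \<le> l" for i
  proof (cases "i = 0")
    case False
    with that 0 have "\<not> q dvd i"
      using nat_dvd_not_less by auto
    then show ?thesis
      by (rule vq_eq_0)
  qed (simp add: vq_def)
  then show ?case
    by (simp add: wq_def)
next
  case (Suc m)
  then show ?case
  proof (induction l)
    case 0
    have last_digit: "Suc (q * m + (q - 1)) = q * Suc m"
      using assms(1) by simp
    have "wq q (q * Suc m) = wq q (q * m + (q - 1)) + vq q (q * Suc m)"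
      using wq_Suc[of q "q * m + (q - 1)"] unfolding last_digit .
    also have "\<dots> = wq q (Suc m) + Suc m"
      using Suc.IH[of "q - 1"] vq_mult_self[OF assms(1), of "Suc m"] assms(1) by (simp add: wq_Suc)
    finally show ?case
      by simp
  next
    case (Suc l)
    have "\<not> q dvd Suc l"
      using Suc.prems nat_dvd_not_less by blast
    then have "\<not> q dvd q * Suc m + Suc l"
      by (metis dvd_add_right_iff dvd_triv_left)
    then have "vq q (Suc (q * Suc m + l)) = 0"
      by (simp add: vq_eq_0)
    then show ?case
      using Suc.IH Suc.prems by (simp add: wq_Suc)
  qed
qed

lemma triangle_Suc: "Suc m * (Suc m + 1) div 2 = m * (m + 1) div 2 + Suc m"
proof -
  have "Suc m * (Suc m + 1) = m * (m + 1) + 2 * Suc m"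
    by simp
  then show ?thesis
    by simp
qed

lemma uq_block:
  assumes "q \<ge> 2" "l < q"
  shows "uq q (q * m + l) = uq q (q * m) + l * (wq q m + m)"
  using assms(2)
proof (induction l)
  case (Suc l)
  then show ?case
    using wq_digit[OF assms(1) Suc.prems] by (simp add: uq_Suc)
qed simp

lemma uq_digit:
  assumes "q \<ge> 2" "l < q"
  shows "int (uq q (q * m + l)) = int q * int (uq q m) + (int l - int q + 1) * int (wq q m)
    + int q * int (m * (m + 1) div 2) + (int l - int q + 1) * int m"
  using assms(2)
proof (induction m arbitrary: l)
  case 0
  then show ?case
    using uq_block[OF assms(1), of l 0] by (simp add: uq_def wq_def vq_def)
next
  case (Suc m)
  have last_digit: "Suc (q * m + (q - 1)) = q * Suc m"
    using assms(1) by simp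
  have "uq q (q * Suc m) = uq q (q * m + (q - 1)) + wq q (Suc m) + Suc m"
    using uq_Suc[of q "q * m + (q - 1)"] wq_digit[OF assms(1), of 0 "Suc m"] assms(1)
    unfolding last_digit by simp
  then have "int (uq q (q * Suc m + l)) = int (uq q (q * m + (q - 1)))
      + (int l + 1) * (int (wq q (Suc m)) + int m + 1)"
    using uq_block[OF assms(1) Suc.prems, of "Suc m"] by (simp add: algebra_simps)
  also have "\<dots> = int q * int (uq q (Suc m)) + (int l - int q + 1) * int (wq q (Suc m))
      + int q * int (Suc m * (Suc m + 1) div 2) + (int l - int q + 1) * int (Suc m)"
    using Suc.IH[of "q - 1"] assms(1) triangle_Suc[of m] by (simp add: uq_Suc algebra_simps)
  finally show ?case .
qed

lemma triangle_digit:
  "int ((q * m + l) * (q * m + l + 1) div 2) = int q ^ 2 * int (m * (m + 1) div 2)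
    + (int l * int q - int q * (int q - 1) div 2) * int m + int l * (int l + 1) div 2"
proof -
  define T :: "int \<Rightarrow> int" where "T x = x * (x + 1) div 2" for x
  have twice_T: "2 * T x = x * (x + 1)" for x
    by (simp add: T_def)
  have T_nat: "int (n * (n + 1) div 2) = T (int n)" for n
    by (simp add: T_def zdiv_int algebra_simps)
  have T_pred: "int q * (int q - 1) div 2 = T (int q - 1)"
    by (simp add: T_def algebra_simps)
  have "2 * T (int (q * m + l)) = 2 * (int q ^ 2 * T (int m)
      + (int l * int q - T (int q - 1)) * int m + T (int l))"
    by (simp add: algebra_simps power2_eq_square twice_T)
  then show ?thesis
    unfolding T_nat T_pred by (simp add: T_def[of "int l"])
qed

definition feature_vector :: "nat \<Rightarrow> nat \<Rightarrow> int list" where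
  "feature_vector q n = [int (uq q n), int (wq q n), int (n * (n + 1) div 2), int n, 1]"

lemma feature_vector_digit:
  assumes "q \<ge> 2" "l < q" "i < 5"
  shows "feature_vector q (q * m + l) ! i = (\<Sum>j<5. Mmat q l i j * feature_vector q m ! j)"
proof -
  have sum5: "(\<Sum>j<5. f j) = f 0 + f 1 + f 2 + f 3 + f 4" for f :: "nat \<Rightarrow> int"
    by (simp add: eval_nat_numeral)
  from assms(3) consider "i = 0" | "i = 1" | "i = 2" | "i = 3" | "i = 4"
    by linarith
  then show ?thesis
  proof cases
    case 1
    then show ?thesis
      using uq_digit[OF assms(1,2), of m] by (simp add: sum5 Mmat_def Let_def feature_vector_def)
  next
    case 2
    then show ?thesis
      using wq_digit[OF assms(1,2), of m] by (simp add: sum5 Mmat_def Let_def feature_vector_def)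
  next
    case 3
    then show ?thesis
      using triangle_digit[of q m l] by (simp add: sum5 Mmat_def Let_def feature_vector_def)
  qed (simp_all add: sum5 Mmat_def feature_vector_def)
qed

section \<open>Counting by the last digit\<close>

lemma gamma_eq_card_feature_vector:
  "gamma A q d s = card {n. n < A \<and> (\<Sum>i<5. s ! i * feature_vector q n ! i) mod int d = 0}"
proof -
  have "(\<Sum>i<5. s ! i * feature_vector q n ! i) = s ! 0 * int (uq q n) + s ! 1 * int (wq q n)
      + s ! 2 * int (n * (n + 1) div 2) + s ! 3 * int n + s ! 4" for n
    by (simp add: feature_vector_def eval_nat_numeral)
  then show ?thesis
    by (simp add: gamma_def)
qed

lemma vecmat_nth: "j < 5 \<Longrightarrow> vecmat q d l s ! j = (\<Sum>i<5. s ! i * Mmat q l i j) mod int d"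
  by (simp add: vecmat_def)

lemma feature_vector_digit_cong:
  assumes "q \<ge> 2" "l < q"
  shows "(\<Sum>i<5. s ! i * feature_vector q (q * m + l) ! i) mod int d
    = (\<Sum>j<5. vecmat q d l s ! j * feature_vector q m ! j) mod int d"
proof -
  define x where "x j = (\<Sum>i<5. s ! i * Mmat q l i j)" for j
  have "(\<Sum>i<5. s ! i * feature_vector q (q * m + l) ! i)
      = (\<Sum>i<5. \<Sum>j<5. s ! i * Mmat q l i j * feature_vector q m ! j)"
    by (simp add: feature_vector_digit[OF assms] sum_distrib_left mult.assoc)
  also have "\<dots> = (\<Sum>j<5. x j * feature_vector q m ! j)"
    unfolding x_def sum_distrib_right by (rule sum.swap)
  finally have "(\<Sum>i<5. s ! i * feature_vector q (q * m + l) ! i) mod int d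
      = (\<Sum>j<5. x j * feature_vector q m ! j mod int d) mod int d"
    by (simp add: mod_sum_eq)
  also have "\<dots> = (\<Sum>j<5. x j mod int d * feature_vector q m ! j mod int d) mod int d"
    by (simp add: mod_mult_left_eq)
  also have "\<dots> = (\<Sum>j<5. vecmat q d l s ! j * feature_vector q m ! j) mod int d"
    by (simp add: mod_sum_eq vecmat_nth x_def)
  finally show ?thesis .
qed

lemma card_digit_split:
  fixes q N :: nat
  shows "card {n. n < q * N \<and> P n} = (\<Sum>l<q. card {m. m < N \<and> P (q * m + l)})"
proof -
  have card_as_sum: "card {n. n < A \<and> Q n} = (\<Sum>n<A. of_bool (Q n))" for A and Q :: "nat \<Rightarrow> bool"
    by (simp add: Int_def)
  have "(\<Sum>n<N * q. of_bool (P n)) = (\<Sum>m<N. \<Sum>n\<in>{m * q..<m * q + q}. of_bool (P n) :: nat)"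
    by (rule sum.nat_group[symmetric])
  also have "\<dots> = (\<Sum>m<N. \<Sum>l<q. of_bool (P (q * m + l)))"
    using sum.shift_bounds_nat_ivl[of "\<lambda>n. of_bool (P n) :: nat" 0 "_ * q" q]
    by (simp add: atLeast0LessThan add.commute mult.commute del: sum_of_bool_eq)
  also have "\<dots> = (\<Sum>l<q. \<Sum>m<N. of_bool (P (q * m + l)))"
    by (rule sum.swap)
  finally show ?thesis
    unfolding card_as_sum by (simp add: mult.commute del: sum_of_bool_eq)
qed

lemma gamma_digit:
  assumes "q \<ge> 2"
  shows "gamma (q * N) q d s = (\<Sum>l<q. gamma N q d (vecmat q d l s))"
  unfolding gamma_eq_card_feature_vector card_digit_split
  by (simp add: feature_vector_digit_cong[OF assms])

lemma sum_card_fibres: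
  fixes q :: nat and g :: "'a \<Rightarrow> 'b :: comm_semiring_1"
  assumes "finite R" "f ` {..<q} \<subseteq> R"
  shows "(\<Sum>t\<in>R. of_nat (card {l. l < q \<and> t = f l}) * g t) = (\<Sum>l<q. g (f l))"
proof -
  have "(\<Sum>l<q. g (f l)) = (\<Sum>t\<in>R. \<Sum>l | l \<in> {..<q} \<and> f l = t. g (f l))"
    by (rule sum.group[symmetric]) (simp_all add: assms)
  also have "\<dots> = (\<Sum>t\<in>R. of_nat (card {l. l < q \<and> t = f l}) * g t)"
  proof (rule sum.cong[OF refl])
    fix t
    have "(\<Sum>l | l \<in> {..<q} \<and> f l = t. g (f l)) = (\<Sum>l | l < q \<and> t = f l. g t)"
      by (rule sum.cong) auto
    also have "\<dots> = of_nat (card {l. l < q \<and> t = f l}) * g t"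
      by (rule sum_constant)
    finally show "(\<Sum>l | l \<in> {..<q} \<and> f l = t. g (f l)) = of_nat (card {l. l < q \<and> t = f l}) * g t" .
  qed
  finally show ?thesis ..
qed

lemma vecmat_in_residues5: "d > 0 \<Longrightarrow> vecmat q d l s \<in> residues5 d"
  by (simp add: residues5_def vecmat_def)

lemma finite_residues5: "finite (residues5 d)"
proof -
  have "residues5 d \<subseteq> {xs. set xs \<subseteq> {0..<int d} \<and> length xs = 5}"
    unfolding residues5_def by (auto simp: in_set_conv_nth)
  then show ?thesis
    by (rule finite_subset) (simp add: finite_lists_length_eq)
qed

lemma gamma_ratio_digit:
  assumes "q \<ge> 2" "d > 0"
  shows "real (gamma (q * N) q d s) / real (q * N)
    = (\<Sum>t\<in>residues5 d. Pmat q d s t * (real (gamma N q d t) / real N))"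
proof -
  have "real (gamma (q * N) q d s) / real (q * N)
      = (\<Sum>l<q. real (gamma N q d (vecmat q d l s)) / real N) / real q"
    unfolding gamma_digit[OF assms(1)] by (simp add: sum_divide_distrib mult.commute)
  also have "\<dots> = (\<Sum>t\<in>residues5 d. real (mu q d s t) * (real (gamma N q d t) / real N)) / real q"
    unfolding mu_def using assms(2)
    by (subst sum_card_fibres[OF finite_residues5]) (auto intro: vecmat_in_residues5)
  finally show ?thesis
    by (simp add: Pmat_def sum_divide_distrib mult.commute)
qed

section \<open>Limits of rational linear recurrences\<close>

lemma limit_fixed_point_of_scaling:
  fixes x :: "'a \<Rightarrow> nat \<Rightarrow> real" and q :: nat
  assumes "q > 0" and lim: "\<And>t. t \<in> R \<Longrightarrow> x t \<longlonglongrightarrow> L t"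
    and scaling: "\<And>N. x s (q * N) = (\<Sum>t\<in>R. a t * x t N)" and "s \<in> R"
  shows "(\<Sum>t\<in>R. a t * L t) = L s"
proof -
  have "strict_mono (\<lambda>N. q * N)"
    using assms(1) by (simp add: strict_mono_def)
  then have "(\<lambda>N. x s (q * N)) \<longlonglongrightarrow> L s"
    using LIMSEQ_subseq_LIMSEQ[OF lim[OF \<open>s \<in> R\<close>]] by (simp add: comp_def)
  moreover have "(\<lambda>N. x s (q * N)) \<longlonglongrightarrow> (\<Sum>t\<in>R. a t * L t)"
    unfolding scaling by (intro tendsto_intros lim)
  ultimately show ?thesis
    using LIMSEQ_unique by blast
qed

lemma rational_linear_dependence:
  fixes v :: "'b \<Rightarrow> 'a \<Rightarrow> real"
  assumes "finite R" "finite I" "card R < card I" "\<And>i x. i \<in> I \<Longrightarrow> x \<in> R \<Longrightarrow> v i x \<in> \<rat>"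
  shows "\<exists>c. (\<forall>i\<in>I. c i \<in> \<rat>) \<and> (\<exists>i\<in>I. c i \<noteq> 0) \<and> (\<forall>x\<in>R. (\<Sum>i\<in>I. c i * v i x) = 0)"
  using assms
proof (induction R arbitrary: I v rule: finite_induct)
  case empty
  then obtain i where "i \<in> I"
    by fastforce
  then show ?case
    by (intro exI[of _ "\<lambda>_. 1"]) auto
next
  case (insert r R)
  show ?case
  proof (cases "\<forall>i\<in>I. v i r = 0")
    case True
    then show ?thesis
      using insert.IH[of I v] insert.prems insert.hyps by auto
  next
    case False
    then obtain j where j: "j \<in> I" "v j r \<noteq> 0"
      by blast
    define I' where "I' = I - {j}"
    define w where "w i x = v i x - v i r / v j r * v j x" for i x
    have "finite I'" "card R < card I'"
      using insert j by (simp_all add: I'_def)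
    moreover have "\<And>i x. i \<in> I' \<Longrightarrow> x \<in> R \<Longrightarrow> w i x \<in> \<rat>"
      using insert.prems j by (auto simp: w_def I'_def)
    ultimately obtain c' where c': "\<forall>i\<in>I'. c' i \<in> \<rat>" "\<exists>i\<in>I'. c' i \<noteq> 0"
      "\<forall>x\<in>R. (\<Sum>i\<in>I'. c' i * w i x) = 0"
      using insert.IH by blast
    define c where "c i = (if i = j then - (\<Sum>i\<in>I'. c' i * v i r) / v j r else c' i)" for i
    have I: "I = insert j I'" "j \<notin> I'"
      using j by (auto simp: I'_def)
    have "(\<Sum>i\<in>I. c i * v i x) = (\<Sum>i\<in>I'. c' i * w i x)" for x
    proof -
      have "(\<Sum>i\<in>I'. c i * v i x) = (\<Sum>i\<in>I'. c' i * v i x)"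
        using I by (intro sum.cong) (auto simp: c_def)
      then show ?thesis
        using I \<open>finite I'\<close>
        by (simp add: c_def w_def algebra_simps sum_subtractf sum_distrib_left sum_divide_distrib
            sum_distrib_right)
    qed
    moreover have "\<forall>i\<in>I. c i \<in> \<rat>"
      using c'(1) insert.prems j by (auto simp: c_def I'_def intro!: Rats_divide Rats_sum Rats_mult)
    moreover have "\<exists>i\<in>I. c i \<noteq> 0"
      using c'(2) I by (auto simp: c_def)
    ultimately show ?thesis
      using c'(3) j(2) by (auto simp: w_def)
  qed
qed

lemma summation_by_parts_tails:
  fixes c y :: "nat \<Rightarrow> real"
  shows "(\<Sum>j<n. (\<Sum>i\<in>{j<..n}. c i) * (y (Suc j) - y j))
    = (\<Sum>i\<le>n. c i * y i) - (\<Sum>i\<le>n. c i) * y 0"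
proof (induction n)
  case (Suc n)
  have "(\<Sum>i\<in>{j<..Suc n}. c i) = (\<Sum>i\<in>{j<..n}. c i) + c (Suc n)" if "j < Suc n" for j
  proof -
    have "{j<..Suc n} = insert (Suc n) {j<..n}"
      using that by auto
    then show ?thesis
      by simp
  qed
  then have "(\<Sum>j<Suc n. (\<Sum>i\<in>{j<..Suc n}. c i) * (y (Suc j) - y j))
      = (\<Sum>j<Suc n. (\<Sum>i\<in>{j<..n}. c i) * (y (Suc j) - y j) + c (Suc n) * (y (Suc j) - y j))"
    by (intro sum.cong) (simp_all add: algebra_simps)
  also have "\<dots> = (\<Sum>j<n. (\<Sum>i\<in>{j<..n}. c i) * (y (Suc j) - y j))
      + c (Suc n) * (\<Sum>j<Suc n. y (Suc j) - y j)"
    by (simp only: sum.distrib sum_distrib_left) simp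
  finally show ?case
    using Suc.IH by (simp add: sum_lessThan_telescope algebra_simps)
qed simp

lemma limit_of_recurrence:
  fixes c x :: "nat \<Rightarrow> real"
  assumes "x \<longlonglongrightarrow> L" "\<And>k. (\<Sum>i\<le>n. c i * x (k + i)) = \<beta>"
  shows "(\<Sum>i\<le>n. c i) * L = \<beta>"
proof -
  have "(\<lambda>k. \<Sum>i\<le>n. c i * x (k + i)) \<longlonglongrightarrow> (\<Sum>i\<le>n. c i * L)"
    by (intro tendsto_intros LIMSEQ_ignore_initial_segment assms(1))
  then show ?thesis
    using assms(2) by (simp add: sum_distrib_right LIMSEQ_const_iff)
qed

lemma rational_limit_of_recurrence:
  fixes c x :: "nat \<Rightarrow> real"
  assumes "\<And>i. i \<le> n \<Longrightarrow> c i \<in> \<rat>" "c n \<noteq> 0" "\<And>k. x k \<in> \<rat>" "\<beta> \<in> \<rat>"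
    "\<And>k. (\<Sum>i\<le>n. c i * x (k + i)) = \<beta>" and lim: "x \<longlonglongrightarrow> L"
  shows "L \<in> \<rat>"
  using assms(1-5)
proof (induction n arbitrary: c \<beta>)
  case 0
  then have "L = \<beta> / c 0"
    using limit_of_recurrence[OF lim "0.prems"(5)] "0.prems"(2) by (simp add: field_simps)
  then show ?case
    using "0.prems"(1,4) by simp
next
  case (Suc m)
  have lim_eq: "(\<Sum>i\<le>Suc m. c i) * L = \<beta>"
    using limit_of_recurrence[OF lim] Suc.prems(5) by blast
  show ?case
  proof (cases "(\<Sum>i\<le>Suc m. c i) = 0")
    case False
    then have "L = \<beta> / (\<Sum>i\<le>Suc m. c i)"
      using lim_eq by (simp add: field_simps)
    moreover have "(\<Sum>i\<le>Suc m. c i) \<in> \<rat>"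
      using Suc.prems(1) by (intro Rats_sum) auto
    ultimately show ?thesis
      using Suc.prems(4) by (metis Rats_divide)
  next
    case True
    define d where "d j = (\<Sum>i\<in>{j<..Suc m}. c i)" for j
    have "(\<Sum>j\<le>m. d j * x (Suc k + j)) = (\<Sum>j\<le>m. d j * x (k + j))" for k
    proof -
      have "(\<Sum>j\<le>m. d j * x (Suc k + j)) - (\<Sum>j\<le>m. d j * x (k + j))
          = (\<Sum>j<Suc m. d j * (x (k + Suc j) - x (k + j)))"
        by (simp add: lessThan_Suc_atMost sum_subtractf[symmetric] algebra_simps)
      also have "\<dots> = (\<Sum>i\<le>Suc m. c i * x (k + i)) - (\<Sum>i\<le>Suc m. c i) * x (k + 0)"
        unfolding d_def by (rule summation_by_parts_tails)
      also have "\<dots> = 0"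
        using Suc.prems(5) True lim_eq by simp
      finally show ?thesis
        by simp
    qed
    then have d_recurrence: "(\<Sum>j\<le>m. d j * x (k + j)) = (\<Sum>j\<le>m. d j * x (0 + j))" for k
      by (induction k) simp_all
    have "{m<..Suc m} = {Suc m}"
      by auto
    then have "d m = c (Suc m)"
      by (simp add: d_def)
    moreover have d_rational: "d j \<in> \<rat>" for j
      using Suc.prems(1) by (auto simp: d_def intro!: Rats_sum)
    ultimately show ?thesis
      using Suc.prems(2,3) by (intro Suc.IH[of d, OF _ _ _ _ d_recurrence]) (auto intro!: Rats_sum)
  qed
qed

lemma rational_limit_of_rational_orbit:
  fixes y :: "nat \<Rightarrow> 'a \<Rightarrow> real"
  assumes "finite R"
    and rational_matrix: "\<And>s t. s \<in> R \<Longrightarrow> t \<in> R \<Longrightarrow> a s t \<in> \<rat>"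
    and rational_start: "\<And>s. s \<in> R \<Longrightarrow> y 0 s \<in> \<rat>"
    and orbit: "\<And>k s. s \<in> R \<Longrightarrow> y (Suc k) s = (\<Sum>t\<in>R. a s t * y k t)"
    and "s \<in> R" and lim: "(\<lambda>k. y k s) \<longlonglongrightarrow> L"
  shows "L \<in> \<rat>"
proof -
  have y_rational: "y k t \<in> \<rat>" if "t \<in> R" for k t
    using that
    by (induction k arbitrary: t) (auto simp: orbit rational_start rational_matrix intro!: Rats_sum)
  obtain c where c_rational: "\<forall>i\<in>{..card R}. c i \<in> \<rat>" and "\<exists>i\<in>{..card R}. c i \<noteq> 0"
    and dependence: "\<forall>t\<in>R. (\<Sum>i\<le>card R. c i * y i t) = 0"
    using rational_linear_dependence[of R "{..card R}" y] assms(1) y_rational by auto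
  define n where "n = Max {i. i \<le> card R \<and> c i \<noteq> 0}"
  have finite_support: "finite {i. i \<le> card R \<and> c i \<noteq> 0}"
    by simp
  have "n \<in> {i. i \<le> card R \<and> c i \<noteq> 0}"
    unfolding n_def using \<open>\<exists>i\<in>{..card R}. c i \<noteq> 0\<close> by (intro Max_in finite_support) auto
  then have "n \<le> card R" "c n \<noteq> 0"
    by simp_all
  have "c i = 0" if "n < i" "i \<le> card R" for i
  proof (rule ccontr)
    assume "c i \<noteq> 0"
    then have "i \<le> n"
      unfolding n_def using that(2) by (intro Max_ge finite_support) simp
    with that(1) show False
      by simp
  qed
  then have trim: "(\<Sum>i\<le>card R. c i * z i) = (\<Sum>i\<le>n. c i * z i)" for z :: "nat \<Rightarrow> real"
    using \<open>n \<le> card R\<close> by (intro sum.mono_neutral_right) auto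
  have recurrence: "(\<Sum>i\<le>n. c i * y (k + i) t) = 0" if "t \<in> R" for k t
    using that
  proof (induction k arbitrary: t)
    case 0
    then show ?case
      using dependence trim[of "\<lambda>i. y i t"] by simp
  next
    case (Suc k)
    have "(\<Sum>i\<le>n. c i * y (Suc k + i) t) = (\<Sum>u\<in>R. a t u * (\<Sum>i\<le>n. c i * y (k + i) u))"
      using Suc.prems by (simp add: orbit sum_distrib_left sum.swap[of _ R] mult_ac)
    then show ?case
      using Suc.IH by simp
  qed
  show ?thesis
    using c_rational \<open>n \<le> card R\<close> y_rational \<open>s \<in> R\<close>
    by (intro rational_limit_of_recurrence[OF _ \<open>c n \<noteq> 0\<close> _ _ recurrence lim]) auto
qed

theorem theorem2p6:
  fixes q d :: nat
  assumes "q \<ge> 2" and "d \<ge> 2"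
    and "\<forall>s\<in>residues5 d. delta_exists q d s"
  shows "(\<forall>s\<in>residues5 d. (\<Sum>t\<in>residues5 d. Pmat q d s t * delta q d t) = delta q d s)
       \<and> (\<forall>s\<in>residues5 d. delta q d s \<in> \<rat>)"
proof -
  define x where "x s = (\<lambda>N. real (gamma N q d s) / real N)" for s
  have lim: "x s \<longlonglongrightarrow> delta q d s" if "s \<in> residues5 d" for s
    using assms(3) that by (simp add: x_def delta_exists_def delta_def convergent_LIMSEQ_iff)
  have scaling: "x s (q * N) = (\<Sum>t\<in>residues5 d. Pmat q d s t * x t N)" for s N
    using gamma_ratio_digit[OF assms(1), of d N s] assms(2) by (simp add: x_def)
  have "(\<Sum>t\<in>residues5 d. Pmat q d s t * delta q d t) = delta q d s" if "s \<in> residues5 d" for s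
    using assms(1) by (intro limit_fixed_point_of_scaling[OF _ lim scaling that]) simp_all
  moreover have "delta q d s \<in> \<rat>" if "s \<in> residues5 d" for s
  proof (rule rational_limit_of_rational_orbit[OF finite_residues5 _ _ _ that])
    show "Pmat q d s' t \<in> \<rat>" for s' t
      by (simp add: Pmat_def)
    show "x s' (q ^ 0) \<in> \<rat>" for s'
      by (simp add: x_def)
    show "x s' (q ^ Suc k) = (\<Sum>t\<in>residues5 d. Pmat q d s' t * x t (q ^ k))" for k s'
      unfolding power_Suc by (rule scaling)
    have "strict_mono (\<lambda>k. q ^ k)"
      using assms(1) by (simp add: strict_mono_def)
    then show "(\<lambda>k. x s (q ^ k)) \<longlonglongrightarrow> delta q d s"
      using LIMSEQ_subseq_LIMSEQ[OF lim[OF that]] by (simp add: comp_def)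
  qed
  ultimately show ?thesis
    by blast
qed

end
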